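(* Assume the abc conjecture. Let $n$ be an odd positive integer. For a large real number $A$ and a square-free integer $d$, let $R(d)$ denote the number of integers $a$ with $A\le |a|\le 2A$ and $d=1-a^n$. Then $$\sum_{d \text{ square-free}} R(d)\gg A$$ as $A\to\infty$.
   Context: The abc conjecture asserts: for every $\epsilon>0$ and all positive coprime integers $a,b,c$ with $a+b=c$, one has $c\ll_\epsilon N(a,b,c)^{1+\epsilon}$, where $N(a,b,c)$ is the product of the distinct primes dividing $abc$. *)

theory Defs
  imports Complex_Main "HOL-Computational_Algebra.Computational_Algebra"
begin

definition abc_radical :: "nat \<Rightarrow> nat \<Rightarrow> nat \<Rightarrow> nat" where
  "abc_radical a b c = (\<Prod>p\<in>prime_factors (a * b * c). p)"

definition abc_conjecture :: bool where
  "abc_conjecture \<longleftrightarrow>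
     (\<forall>\<epsilon>::real. \<epsilon> > 0 \<longrightarrow>
        (\<exists>K::real. K > 0 \<and>
          (\<forall>a b c :: nat. 0 < a \<longrightarrow> 0 < b \<longrightarrow> 0 < c \<longrightarrow>
             coprime a b \<longrightarrow> coprime a c \<longrightarrow> coprime b c \<longrightarrow> a + b = c \<longrightarrow>
             real c \<le> K * real (abc_radical a b c) powr (1 + \<epsilon>))))"

definition R_count :: "nat \<Rightarrow> real \<Rightarrow> int \<Rightarrow> nat" where
  "R_count n A d = card {a::int. A \<le> real_of_int \<bar>a\<bar> \<and> real_of_int \<bar>a\<bar> \<le> 2 * A \<and> d = 1 - a ^ n}"

end

theory Submission
  imports Defs "HOL-Number_Theory.Number_Theory" "HOL-Real_Asymp.Real_Asymp"
begin

(* Put P = (8n)! and let x = P c run over the multiples of P in [A, 2A]. As n is odd, both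
   1 - x^n and 1 + x^n = 1 - (-x)^n are values 1 - a^n with A <= |a| <= 2A. If neither is
   squarefree, pick primes p, q with p^2 | 1 - x^n and q^2 | 1 + x^n. Every prime up to 8n
   divides x, so p, q > 8n, and p <> q since both divide 2. Then (pq)^2 divides x^(2n) - 1,
   and the abc conjecture for 1 + (x^(2n) - 1) = x^(2n) gives pq < (x/2)^(6/5) <= A^(6/5),
   so p or q is at most A^(3/5). For a fixed prime p > 8n the 2n-th roots of unity modulo p
   lift uniquely modulo p^2, so at most 2n (A/(P p^2) + 1) values of c have
   p^2 | (Pc)^(2n) - 1; summing over 8n < p <= A^(3/5) excludes at most A/(4P) + 2n A^(3/5)
   of the roughly A/P values of c, and every remaining c yields a squarefree value. *)

section \<open>Radicals and the abc conjecture\<close>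

definition rad :: "nat \<Rightarrow> nat" where
  "rad m = (\<Prod>p\<in>prime_factors m. p)"

lemma abc_radical_eq_rad: "abc_radical a b c = rad (a * b * c)"
  by (simp add: abc_radical_def rad_def)

lemma rad_pos: "rad m > 0"
  unfolding rad_def by (intro prod_pos) (auto intro: prime_gt_0_nat)

lemma rad_le:
  assumes "m > 0"
  shows "rad m \<le> m"
proof -
  have "rad m \<le> (\<Prod>p\<in>prime_factors m. p ^ multiplicity p m)"
    unfolding rad_def
  proof (rule prod_mono)
    fix p assume "p \<in> prime_factors m"
    then have "multiplicity p m \<ge> 1" "p > 0"
      using assms by (auto simp: prime_factors_multiplicity dest: prime_gt_0_nat)
    then show "0 \<le> p \<and> p \<le> p ^ multiplicity p m"
      using self_le_power[of p "multiplicity p m"] by simp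
  qed
  also have "\<dots> = m" using prod_prime_factors[of m] assms by simp
  finally show ?thesis .
qed

lemma rad_mono:
  assumes "prime_factors m \<subseteq> prime_factors k"
  shows "rad m \<le> rad k"
proof -
  have "rad m dvd rad k"
    unfolding rad_def by (rule prod_dvd_prod_subset[OF _ assms]) simp
  then show ?thesis using rad_pos by (simp add: dvd_imp_le)
qed

lemma rad_mult_le:
  assumes "a > 0" "b > 0"
  shows "rad (a * b) \<le> rad a * rad b"
proof -
  have "rad (a * b) * (\<Prod>p\<in>prime_factors a \<inter> prime_factors b. p) = rad a * rad b"
    using assms by (simp add: rad_def prime_factors_product prod.union_inter)
  moreover have "(\<Prod>p\<in>prime_factors a \<inter> prime_factors b. p) > 0"
    by (intro prod_pos) (auto intro: prime_gt_0_nat)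
  ultimately show ?thesis
    by (metis One_nat_def Suc_leI mult_le_mono2 mult.right_neutral)
qed

lemma mult_rad_le_of_square_dvd:
  assumes "m\<^sup>2 dvd b" "b > 0"
  shows "m * rad b \<le> b"
proof -
  obtain t where b: "b = m\<^sup>2 * t" using assms(1) by blast
  then have "m > 0" "t > 0" using assms(2) by (auto intro: gr0I)
  have "prime_factors b \<subseteq> prime_factors (m * t)"
  proof
    fix p assume "p \<in> prime_factors b"
    then have "prime p" "p dvd m * m * t" using b by (auto simp: power2_eq_square)
    then have "p dvd m * t" by (metis dvd_mult2 prime_dvd_mult_iff)
    then show "p \<in> prime_factors (m * t)"
      using \<open>prime p\<close> \<open>m > 0\<close> \<open>t > 0\<close> by (auto simp: prime_factors_dvd)
  qed
  then have "rad b \<le> m * t"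
    using rad_mono rad_le[of "m * t"] \<open>m > 0\<close> \<open>t > 0\<close> by (meson le_trans nat_0_less_mult_iff)
  then show ?thesis using b by (simp add: power2_eq_square)
qed

lemma abc_square_divisor_bound:
  assumes abc: abc_conjecture and "\<epsilon> > 0"
  obtains K :: real where "K > 0"
    "\<And>x m e. x \<ge> 2 \<Longrightarrow> e > 0 \<Longrightarrow> m\<^sup>2 dvd x ^ e - 1 \<Longrightarrow>
       real x ^ e \<le> K * (real x ^ (e + 1) / real m) powr (1 + \<epsilon>)"
proof -
  obtain K :: real where "K > 0" and K: "\<And>a b c :: nat. 0 < a \<Longrightarrow> 0 < b \<Longrightarrow> 0 < c \<Longrightarrow>
      coprime a b \<Longrightarrow> coprime a c \<Longrightarrow> coprime b c \<Longrightarrow> a + b = c \<Longrightarrow>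
      real c \<le> K * real (abc_radical a b c) powr (1 + \<epsilon>)"
    using abc \<open>\<epsilon> > 0\<close> unfolding abc_conjecture_def by blast
  show ?thesis
  proof (rule that[OF \<open>K > 0\<close>])
    fix x m e :: nat
    assume "x \<ge> 2" "e > 0" and dvd: "m\<^sup>2 dvd x ^ e - 1"
    define b where "b = x ^ e - 1"
    have "x ^ e \<ge> 2" using self_le_power[of x e] \<open>x \<ge> 2\<close> \<open>e > 0\<close> by simp
    then have "b > 0" and c: "x ^ e = b + 1" unfolding b_def by auto
    have "m > 0" using dvd \<open>b > 0\<close> unfolding b_def by (auto intro: gr0I)
    have abc_x: "real (x ^ e) \<le> K * real (rad (b * x ^ e)) powr (1 + \<epsilon>)"
      using K[of 1 b "x ^ e"] \<open>b > 0\<close> c by (simp add: abc_radical_eq_rad)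
    have "m * rad (b * x ^ e) \<le> m * rad b * rad (x ^ e)"
      using rad_mult_le[of b "x ^ e"] \<open>b > 0\<close> \<open>x \<ge> 2\<close> by simp
    also have "\<dots> \<le> b * x"
      using mult_rad_le_of_square_dvd[of m b] dvd \<open>b > 0\<close> rad_le[of x] \<open>x \<ge> 2\<close> \<open>e > 0\<close>
      by (intro mult_le_mono) (auto simp: b_def rad_def prime_factors_power)
    also have "\<dots> \<le> x ^ (e + 1)" using c by simp
    finally have "real m * real (rad (b * x ^ e)) \<le> real x ^ (e + 1)"
      by (metis of_nat_le_iff of_nat_mult of_nat_power)
    then have "real (rad (b * x ^ e)) \<le> real x ^ (e + 1) / real m"
      using \<open>m > 0\<close> by (simp add: field_simps)
    then have "real (rad (b * x ^ e)) powr (1 + \<epsilon>) \<le> (real x ^ (e + 1) / real m) powr (1 + \<epsilon>)"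
      using \<open>\<epsilon> > 0\<close> by (intro powr_mono2) auto
    then show "real x ^ e \<le> K * (real x ^ (e + 1) / real m) powr (1 + \<epsilon>)"
      using abc_x \<open>K > 0\<close> by (simp add: order_trans[OF _ mult_left_mono])
  qed
qed

lemma powr_tenth_le_of_abc_inequality:
  fixes n :: nat and K u T :: real
  assumes "n \<ge> 1" "K > 0" "u \<ge> 1" and T: "(u / 2) powr (6/5) \<le> T"
    and abc: "u ^ (2 * n) \<le> K * (u ^ (2 * n + 1) / T) powr (1 + 1 / (20 * real n))"
  shows "u powr (1/10) \<le> 4 * K"
proof -
  \<comment> \<open>the exponent 1 + 1/(20n) is small enough that (2n - 1/5) a \<le> 2n - 1/10\<close>
  define a where "a = 1 + 1 / (20 * real n)"
  have a: "1 \<le> a" "a \<le> 21/20" using \<open>n \<ge> 1\<close> unfolding a_def by (auto simp: field_simps)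
  have "u > 0" "T > 0" using \<open>u \<ge> 1\<close> T by (auto intro: less_le_trans[OF _ T])
  have pow_eq: "u ^ k = u powr real k" for k using \<open>u > 0\<close> by (simp add: powr_realpow)
  have "u ^ (2 * n + 1) / T \<le> u powr (2 * n + 1) / (u / 2) powr (6/5)"
    using T \<open>u > 0\<close> pow_eq[of "2 * n + 1"] by (intro frac_le) auto
  also have "\<dots> = 2 powr (6/5) * u powr ((2 * n + 1) - 6/5)"
    by (subst powr_diff) (simp_all add: powr_divide)
  also have "(2 * n + 1) - 6/5 = 2 * real n - 1/5" by simp
  finally have "(u ^ (2 * n + 1) / T) powr a \<le> (2 powr (6/5) * u powr (2 * n - 1/5)) powr a"
    using \<open>T > 0\<close> \<open>u > 0\<close> a by (intro powr_mono2) auto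
  also have "\<dots> = 2 powr (6/5 * a) * u powr ((2 * n - 1/5) * a)"
    by (simp add: powr_mult powr_powr)
  also have "\<dots> \<le> 4 * u powr (2 * n - 1/10)"
  proof (rule mult_mono)
    have "2 powr (6/5 * a) \<le> 2 powr (2::real)" using a by (intro powr_mono) auto
    then show "2 powr (6/5 * a) \<le> 4" by simp
    have "(2 * n - 1/5) * a = 2 * n - 1/10 - 1 / (100 * n)"
      using \<open>n \<ge> 1\<close> unfolding a_def by (simp add: field_simps)
    then show "u powr ((2 * n - 1/5) * a) \<le> u powr (2 * n - 1/10)"
      using \<open>u \<ge> 1\<close> by (intro powr_mono) auto
  qed simp_all
  finally have bound: "(u ^ (2 * n + 1) / T) powr a \<le> 4 * u powr (2 * n - 1/10)" .
  have "u powr (1/10) * u powr (2 * n - 1/10) = u ^ (2 * n)"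
    by (simp add: pow_eq powr_add[symmetric])
  also have "\<dots> \<le> K * (u ^ (2 * n + 1) / T) powr a"
    using abc unfolding a_def by simp
  also have "\<dots> \<le> (4 * K) * u powr (2 * n - 1/10)"
    using mult_left_mono[OF bound, of K] \<open>K > 0\<close> by simp
  finally show ?thesis using \<open>u > 0\<close> by simp
qed

lemma abc_square_divisor_small:
  assumes abc: abc_conjecture and "n > 0"
  shows "\<forall>\<^sub>F x in at_top. \<forall>m. int m ^ 2 dvd x ^ (2 * n) - 1 \<longrightarrow>
           real m < (real_of_int x / 2) powr (6/5)"
proof -
  obtain K where "K > 0" and K: "\<And>x m e. x \<ge> 2 \<Longrightarrow> e > 0 \<Longrightarrow> m\<^sup>2 dvd x ^ e - 1 \<Longrightarrow>
      real x ^ e \<le> K * (real x ^ (e + 1) / real m) powr (1 + 1 / (20 * real n))"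
    using abc_square_divisor_bound[OF abc, of "1 / (20 * real n)"] \<open>n > 0\<close> by auto
  show ?thesis
  proof (rule eventually_mono[OF eventually_ge_at_top[of "max 2 (\<lceil>(4 * K) powr 10\<rceil> + 1)"]],
         intro allI impI)
    fix x :: int and m
    assume x: "max 2 (\<lceil>(4 * K) powr 10\<rceil> + 1) \<le> x" and dvd: "int m ^ 2 dvd x ^ (2 * n) - 1"
    define y where "y = nat x"
    have "y \<ge> 2" and y: "real y = real_of_int x" using x unfolding y_def by auto
    have "int (y ^ (2 * n) - 1) = x ^ (2 * n) - 1"
      using \<open>y \<ge> 2\<close> x by (simp add: of_nat_diff y_def)
    then have "m\<^sup>2 dvd y ^ (2 * n) - 1"
      using dvd by (metis int_dvd_int_iff of_nat_power)
    then have abc_y: "real y ^ (2 * n) \<le> K * (real y ^ (2 * n + 1) / real m) powr (1 + 1 / (20 * real n))"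
      using \<open>y \<ge> 2\<close> \<open>n > 0\<close> by (intro K) auto
    have "real_of_int (\<lceil>(4 * K) powr 10\<rceil> + 1) \<le> real_of_int x"
      using x by (simp only: of_int_le_iff max.bounded_iff)
    then have "(4 * K) powr 10 < real y"
      using le_of_int_ceiling[of "(4 * K) powr 10"] y by linarith
    then have "((4 * K) powr 10) powr (1/10) < real y powr (1/10)"
      by (intro powr_less_mono2) auto
    then have large: "4 * K < real y powr (1/10)"
      using \<open>K > 0\<close> by (subst (asm) powr_powr) simp
    show "real m < (real_of_int x / 2) powr (6/5)"
    proof (rule ccontr)
      assume "\<not> ?thesis"
      then have "real y powr (1/10) \<le> 4 * K"
        using \<open>n > 0\<close> \<open>K > 0\<close> \<open>y \<ge> 2\<close> y abc_y
        by (intro powr_tenth_le_of_abc_inequality[where T = "real m"]) auto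
      then show False using large by simp
    qed
  qed
qed

section \<open>Roots of unity modulo prime squares\<close>

lemma card_roots_of_unity_mod_prime:
  fixes p d :: nat
  assumes "prime p" "d > 0"
  shows "card {x \<in> {0..int p - 1}. x ^ d mod int p = 1} \<le> d"
proof -
  interpret R: residues_prime p "residue_ring (int p)"
    by (simp add: residues_prime_def assms)
  have fin: "finite (carrier (residue_ring (int p)))" by (simp add: R.res_carrier_eq)
  have eq: "{x \<in> carrier (residue_ring (int p)). x [^]\<^bsub>residue_ring (int p)\<^esub> d = \<one>\<^bsub>residue_ring (int p)\<^esub>}
     = {x \<in> {0..int p - 1}. x ^ d mod int p = 1}"
  proof -
    have "x [^]\<^bsub>residue_ring (int p)\<^esub> d = x ^ d mod int p" if "x \<in> {0..int p - 1}" for x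
    proof -
      have "x mod int p = x" using that by auto
      then show ?thesis using R.pow_cong[of x d] by simp
    qed
    then show ?thesis by (auto simp: R.res_carrier_eq R.res_one_eq)
  qed
  show ?thesis using R.num_roots_le_deg[OF fin, of d] assms(2) eq by simp
qed

lemma roots_of_unity_mod_prime_sq_cong:
  fixes p k :: nat and x y :: int
  assumes p: "prime p" and "\<not> p dvd k" and "[x = y] (mod int p)"
    and x: "int p ^ 2 dvd x ^ k - 1" and y: "int p ^ 2 dvd y ^ k - 1"
  shows "int p ^ 2 dvd x - y"
proof -
  have "prime (int p)" using p by simp
  define S where "S = (\<Sum>i<k. y ^ (k - Suc i) * x ^ i)"
  have "x ^ k - y ^ k = (x - y) * S" unfolding S_def by (rule power_diff_sumr2)
  moreover have "int p ^ 2 dvd (x ^ k - 1) - (y ^ k - 1)" using x y by (rule dvd_diff)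
  ultimately have "int p ^ 2 dvd (x - y) * S" by simp
  \<comment> \<open>S is congruent to k y^(k-1), a unit modulo p\<close>
  have "[S = (\<Sum>i<k. y ^ (k - Suc i) * y ^ i)] (mod int p)"
    unfolding S_def by (intro cong_sum cong_mult cong_refl cong_pow \<open>[x = y] (mod int p)\<close>)
  moreover have "y ^ (k - Suc i) * y ^ i = y ^ (k - 1)" if "i < k" for i
    using that by (simp flip: power_add)
  ultimately have S: "[S = int k * y ^ (k - 1)] (mod int p)" by simp
  have "\<not> int p dvd y"
  proof
    assume "int p dvd y"
    then have "int p dvd y ^ k" using \<open>\<not> p dvd k\<close> by (cases k) auto
    moreover have "int p dvd y ^ k - 1" using y by (simp add: power2_eq_square dvd_mult_left)
    ultimately have "int p dvd y ^ k - (y ^ k - 1)" by (rule dvd_diff)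
    then show False using p by simp
  qed
  have "\<not> int p dvd S"
  proof
    assume "int p dvd S"
    then have "int p dvd int k * y ^ (k - 1)" using S cong_dvd_iff by blast
    moreover have "\<not> int p dvd int k" using \<open>\<not> p dvd k\<close> by simp
    moreover have "\<not> int p dvd y ^ (k - 1)"
      using \<open>\<not> int p dvd y\<close> prime_dvd_power[OF \<open>prime (int p)\<close>] by blast
    ultimately show False using \<open>prime (int p)\<close> prime_dvd_mult_iff by blast
  qed
  then have "coprime (int p ^ 2) S" using \<open>prime (int p)\<close> by (simp add: prime_imp_coprime)
  with \<open>int p ^ 2 dvd (x - y) * S\<close> show ?thesis by (simp add: coprime_dvd_mult_left_iff)
qed

lemma card_pairwise_cong_le:
  fixes S :: "int set" and m :: int
  assumes "m > 0" "L \<le> U" and S: "S \<subseteq> {L..U}"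
    and cong: "\<And>c c'. c \<in> S \<Longrightarrow> c' \<in> S \<Longrightarrow> m dvd c - c'"
  shows "real (card S) \<le> real_of_int (U - L) / m + 1"
proof -
  have "inj_on (\<lambda>c. (c - L) div m) S"
  proof
    fix c c' assume c: "c \<in> S" "c' \<in> S" "(c - L) div m = (c' - L) div m"
    have "m dvd (c - L) - (c' - L)" using cong c by simp
    then have "(c - L) mod m = (c' - L) mod m" by (simp add: mod_eq_dvd_iff)
    then have "c - L = c' - L" using c(3) by (metis div_mult_mod_eq)
    then show "c = c'" by simp
  qed
  moreover have "(\<lambda>c. (c - L) div m) ` S \<subseteq> {0..(U - L) div m}"
  proof
    fix z assume "z \<in> (\<lambda>c. (c - L) div m) ` S"
    then obtain c where "c \<in> S" and z: "z = (c - L) div m" by blast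
    then have "L \<le> c" "c \<le> U" using S by auto
    then show "z \<in> {0..(U - L) div m}"
      unfolding z using \<open>m > 0\<close> by (auto intro: zdiv_mono1 simp: div_int_pos_iff)
  qed
  ultimately have "card S \<le> card {0..(U - L) div m}"
    by (intro card_inj_on_le) auto
  also have "\<dots> = nat ((U - L) div m + 1)" by simp
  finally have "int (card S) \<le> (U - L) div m + 1"
    using \<open>m > 0\<close> \<open>L \<le> U\<close> by (simp add: le_nat_iff div_int_pos_iff)
  then have "real (card S) \<le> real_of_int ((U - L) div m) + 1"
    using of_int_le_iff[where 'a = real, THEN iffD2] by fastforce
  also have "real_of_int ((U - L) div m) \<le> real_of_int (U - L) / m"
    using real_of_int_div4[of "U - L" m] by simp
  finally show ?thesis by simp
qed

lemma card_roots_of_unity_mod_prime_sq_in_class_le: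
  fixes p k :: nat and P L U r :: int
  assumes p: "prime p" and "\<not> p dvd k" "\<not> int p dvd P" "L \<le> U"
  shows "real (card {c \<in> {L..U}. int p ^ 2 dvd (P * c) ^ k - 1 \<and> (P * c) mod int p = r})
          \<le> real_of_int (U - L) / real p ^ 2 + 1" (is "real (card ?F) \<le> _")
proof -
  have "prime (int p)" "int p > 1" using p prime_gt_1_nat by auto
  have cong: "int p ^ 2 dvd c - c'" if "c \<in> ?F" "c' \<in> ?F" for c c'
  proof -
    have "[P * c = P * c'] (mod int p)" using that by (simp add: Cong.cong_def)
    then have "int p ^ 2 dvd P * c - P * c'"
      using that roots_of_unity_mod_prime_sq_cong[OF p \<open>\<not> p dvd k\<close>] by blast
    then have "int p ^ 2 dvd P * (c - c')" by (simp add: right_diff_distrib)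
    moreover have "coprime (int p ^ 2) P"
      using \<open>\<not> int p dvd P\<close> \<open>prime (int p)\<close> by (simp add: prime_imp_coprime)
    ultimately show ?thesis by (simp add: coprime_dvd_mult_right_iff)
  qed
  have "?F \<subseteq> {L..U}" by blast
  have "real (card ?F) \<le> real_of_int (U - L) / real_of_int (int p ^ 2) + 1"
    by (rule card_pairwise_cong_le[OF _ \<open>L \<le> U\<close> \<open>?F \<subseteq> {L..U}\<close> cong]) (use \<open>int p > 1\<close> in simp)
  then show ?thesis by simp
qed

lemma card_roots_of_unity_mod_prime_sq_le:
  fixes p k :: nat and P L U :: int
  assumes p: "prime p" and "\<not> p dvd k" "k > 0" "\<not> int p dvd P" "L \<le> U"
  shows "real (card {c \<in> {L..U}. int p ^ 2 dvd (P * c) ^ k - 1})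
          \<le> real k * (real_of_int (U - L) / real p ^ 2 + 1)" (is "real (card ?S) \<le> _")
proof -
  define R where "R = {r \<in> {0..int p - 1}. r ^ k mod int p = 1}"
  define F where "F r = {c \<in> {L..U}. int p ^ 2 dvd (P * c) ^ k - 1 \<and> (P * c) mod int p = r}" for r
  have "int p > 1" using p prime_gt_1_nat by auto
  have "finite R" unfolding R_def by (rule finite_subset[of _ "{0..int p - 1}"]) auto
  have "finite (F r)" for r by (rule finite_subset[of _ "{L..U}"]) (auto simp: F_def)
  have "?S \<subseteq> (\<Union>r\<in>R. F r)"
  proof
    fix c assume c: "c \<in> ?S"
    then have "int p dvd (P * c) ^ k - 1" by (auto simp: power2_eq_square dvd_mult_left)
    then have "(P * c) ^ k mod int p = 1 mod int p" by (simp add: mod_eq_dvd_iff)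
    then have "((P * c) mod int p) ^ k mod int p = 1" using \<open>int p > 1\<close> by (simp add: power_mod)
    then show "c \<in> (\<Union>r\<in>R. F r)" using c \<open>int p > 1\<close> by (auto simp: R_def F_def)
  qed
  then have "card ?S \<le> card (\<Union>r\<in>R. F r)"
    by (rule card_mono[rotated]) (use \<open>finite R\<close> \<open>finite (F _)\<close> in auto)
  also have "\<dots> \<le> (\<Sum>r\<in>R. card (F r))" using \<open>finite R\<close> by (rule card_UN_le)
  finally have "real (card ?S) \<le> (\<Sum>r\<in>R. real (card (F r)))"
    unfolding of_nat_sum[symmetric] of_nat_le_iff .
  also have "\<dots> \<le> (\<Sum>r\<in>R. real_of_int (U - L) / real p ^ 2 + 1)"
    unfolding F_def using assms by (intro sum_mono card_roots_of_unity_mod_prime_sq_in_class_le)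
  also have "\<dots> = real (card R) * (real_of_int (U - L) / real p ^ 2 + 1)" by simp
  also have "\<dots> \<le> real k * (real_of_int (U - L) / real p ^ 2 + 1)"
    using card_roots_of_unity_mod_prime[OF p \<open>k > 0\<close>] \<open>L \<le> U\<close>
    by (intro mult_right_mono) (auto simp: R_def)
  finally show ?thesis .
qed

section \<open>Counting squarefree values of 1 - a^n\<close>

lemma sum_inverse_squares_greaterThan_le:
  fixes M K :: nat
  assumes "M \<ge> 1"
  shows "(\<Sum>m\<in>{M<..K}. 1 / real m ^ 2) \<le> 1 / real M"
proof -
  \<comment> \<open>telescoping, via 1/(K+1)^2 \<le> 1/K - 1/(K+1)\<close>
  have "(\<Sum>m\<in>{M<..K}. 1 / real m ^ 2) \<le> 1 / real M - 1 / real (max M K)"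
  proof (induction K)
    case 0
    then show ?case by simp
  next
    case (Suc K)
    show ?case
    proof (cases "Suc K \<le> M")
      case True
      then have "{M<..Suc K} = {}" by auto
      then show ?thesis using True by (simp add: max_def)
    next
      case False
      then have insert: "{M<..Suc K} = insert (Suc K) {M<..K}"
        and max: "max M K = K" "max M (Suc K) = Suc K" and "real K \<ge> 1"
        using assms by auto
      have "1 / real (Suc K) ^ 2 \<le> 1 / (real K * real (Suc K))"
        using \<open>real K \<ge> 1\<close> by (intro divide_left_mono) (auto simp: power2_eq_square)
      also have "\<dots> = 1 / real K - 1 / real (Suc K)" using \<open>real K \<ge> 1\<close> by (simp add: field_simps)
      finally have "1 / real (Suc K) ^ 2 \<le> 1 / real K - 1 / real (Suc K)" .
      then show ?thesis using Suc.IH insert max by simp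
    qed
  qed
  also have "\<dots> \<le> 1 / real M" by simp
  finally show ?thesis .
qed

lemma card_exceptional_le:
  fixes e M :: nat and P L U :: int and Y :: real
  assumes "0 < e" "e \<le> M" "L \<le> U" "0 \<le> Y"
    and coprime: "\<And>p. prime p \<Longrightarrow> M < p \<Longrightarrow> \<not> int p dvd P"
  shows "real (card {c \<in> {L..U}. \<exists>p. prime p \<and> M < p \<and> real p \<le> Y \<and> int p ^ 2 dvd (P * c) ^ e - 1})
    \<le> real e * (real_of_int (U - L) / M + Y)" (is "real (card ?E) \<le> _")
proof -
  define N where "N = nat \<lfloor>Y\<rfloor>"
  define B where "B p = {c \<in> {L..U}. prime p \<and> int p ^ 2 dvd (P * c) ^ e - 1}" for p :: nat
  have "finite (B p)" for p by (rule finite_subset[of _ "{L..U}"]) (auto simp: B_def)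
  have "?E \<subseteq> (\<Union>p\<in>{M<..N}. B p)"
  proof
    fix c assume "c \<in> ?E"
    then obtain p where "c \<in> {L..U}" "prime p" "M < p" "real p \<le> Y"
      "int p ^ 2 dvd (P * c) ^ e - 1" by blast
    moreover have "p \<le> N" using \<open>real p \<le> Y\<close> unfolding N_def by (rule le_nat_floor)
    ultimately show "c \<in> (\<Union>p\<in>{M<..N}. B p)" by (auto simp: B_def)
  qed
  then have "card ?E \<le> card (\<Union>p\<in>{M<..N}. B p)"
    by (rule card_mono[rotated]) (use \<open>finite (B _)\<close> in auto)
  also have "\<dots> \<le> (\<Sum>p\<in>{M<..N}. card (B p))" by (rule card_UN_le) simp
  finally have "real (card ?E) \<le> (\<Sum>p\<in>{M<..N}. real (card (B p)))"
    unfolding of_nat_sum[symmetric] of_nat_le_iff .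
  also have "\<dots> \<le> (\<Sum>p\<in>{M<..N}. real e * (real_of_int (U - L) / real p ^ 2 + 1))"
  proof (rule sum_mono)
    fix p assume "p \<in> {M<..N}"
    then have "\<not> p dvd e" using \<open>e \<le> M\<close> \<open>0 < e\<close> by (auto dest: dvd_imp_le)
    then show "real (card (B p)) \<le> real e * (real_of_int (U - L) / real p ^ 2 + 1)"
      using card_roots_of_unity_mod_prime_sq_le[of p e P L U] coprime \<open>p \<in> {M<..N}\<close> \<open>0 < e\<close> \<open>L \<le> U\<close>
      by (cases "prime p") (auto simp: B_def)
  qed
  also have "\<dots> = real e * real_of_int (U - L) * (\<Sum>p\<in>{M<..N}. 1 / real p ^ 2)
                    + real e * real (card {M<..N})"
    by (simp add: sum.distrib sum_distrib_left ring_distribs)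
  also have "\<dots> \<le> real e * real_of_int (U - L) * (1 / M) + real e * Y"
  proof (rule add_mono)
    show "real e * real_of_int (U - L) * (\<Sum>p\<in>{M<..N}. 1 / real p ^ 2)
        \<le> real e * real_of_int (U - L) * (1 / M)"
      using sum_inverse_squares_greaterThan_le[of M N] \<open>0 < e\<close> \<open>e \<le> M\<close> \<open>L \<le> U\<close>
      by (intro mult_left_mono) auto
    have "real (card {M<..N}) \<le> Y" using \<open>0 \<le> Y\<close> by (simp add: N_def) linarith
    then show "real e * real (card {M<..N}) \<le> real e * Y" by (simp add: mult_left_mono)
  qed
  finally show ?thesis by (simp add: field_simps)
qed

lemma not_squarefree_imp_prime_square_dvd:
  fixes z :: int
  assumes "z \<noteq> 0" "\<not> squarefree z"
  obtains p :: nat where "prime p" "int p ^ 2 dvd z"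
proof -
  obtain q :: int where "prime q" "q ^ 2 dvd z"
    using assms squarefree_factorial_semiring by blast
  then show ?thesis
    using that[of "nat q"] by (simp add: prime_gt_0_int order.strict_implies_order prime_nat_iff_prime)
qed

lemma squarefree_one_minus_or_one_plus_pow:
  fixes x :: int and n M :: nat and Y :: real
  assumes "n > 0" "2 \<le> M" "fact M dvd x" "0 \<le> Y"
    and no_medium: "\<And>p. prime p \<Longrightarrow> M < p \<Longrightarrow> real p \<le> Y \<Longrightarrow> \<not> int p ^ 2 dvd x ^ (2 * n) - 1"
    and no_large: "\<And>m. int m ^ 2 dvd x ^ (2 * n) - 1 \<Longrightarrow> real m < Y ^ 2"
  shows "squarefree (1 - x ^ n) \<or> squarefree (1 + x ^ n)"
proof (rule ccontr)
  assume not_squarefree: "\<not> ?thesis"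
  have small_dvd: "int r dvd x" if "prime r" "r \<le> M" for r
  proof -
    have "r dvd fact M" using that by (simp add: prime_dvd_fact_iff)
    then have "int r dvd fact M" by (metis int_dvd_int_iff of_nat_fact)
    then show ?thesis using \<open>fact M dvd x\<close> by (rule dvd_trans)
  qed
  have large: "M < r" if "prime r" "int r dvd 1 - x ^ n \<or> int r dvd 1 + x ^ n" for r
  proof (rule ccontr)
    assume "\<not> M < r"
    then have "int r dvd x ^ n"
      using small_dvd[OF \<open>prime r\<close>] dvd_power[of n x] \<open>n > 0\<close> by (meson dvd_trans not_less)
    then have "int r dvd 1" using that(2) by (metis add_diff_cancel_right' diff_add_cancel dvd_add dvd_diff)
    then show False using \<open>prime r\<close> by simp
  qed
  have "even x" using small_dvd[of 2] \<open>2 \<le> M\<close> by simp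
  then have "odd (1 - x ^ n)" "odd (1 + x ^ n)" using \<open>n > 0\<close> by auto
  then obtain p q where p: "prime p" "int p ^ 2 dvd 1 - x ^ n" and q: "prime q" "int q ^ 2 dvd 1 + x ^ n"
    using not_squarefree not_squarefree_imp_prime_square_dvd by (metis even_zero)
  then have "M < p" "M < q" using large by (metis dvd_power dvd_trans zero_less_numeral)+
  have "p \<noteq> q"
  proof
    assume "p = q"
    then have "int p dvd (1 - x ^ n) + (1 + x ^ n)" using p q by (metis dvd_add dvd_power dvd_trans zero_less_numeral)
    then have "p dvd 2" by (simp add: int_dvd_int_iff[of p 2, simplified])
    then show False using \<open>M < p\<close> \<open>2 \<le> M\<close> by (auto dest: dvd_imp_le)
  qed
  have factor: "x ^ (2 * n) - 1 = - ((1 - x ^ n) * (1 + x ^ n))"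
    by (simp add: power_mult power2_eq_square algebra_simps)
  have "Y < real p" "Y < real q"
    using no_medium p q \<open>M < p\<close> \<open>M < q\<close> unfolding factor by (meson dvd_minus_iff dvd_mult dvd_mult2 not_le)+
  then have "Y ^ 2 < real (p * q)" using \<open>0 \<le> Y\<close> by (simp add: power2_eq_square mult_strict_mono)
  moreover have "int (p * q) ^ 2 dvd x ^ (2 * n) - 1"
    using mult_dvd_mono[OF p(2) q(2)] unfolding factor by (simp add: power_mult_distrib)
  then have "real (p * q) < Y ^ 2" by (rule no_large)
  ultimately show False by simp
qed

lemma finite_int_abs_le: "finite {a :: int. real_of_int \<bar>a\<bar> \<le> B}"
proof (rule finite_subset)
  show "{a :: int. real_of_int \<bar>a\<bar> \<le> B} \<subseteq> {-\<lceil>B\<rceil>..\<lceil>B\<rceil>}"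
    by (auto simp: abs_le_iff ceiling_le_iff le_ceiling_iff) linarith+
qed simp

lemma sum_R_count_squarefree:
  "(\<Sum>d \<in> {d::int. squarefree d \<and> R_count n A d \<noteq> 0}. R_count n A d)
     = card {a::int. A \<le> real_of_int \<bar>a\<bar> \<and> real_of_int \<bar>a\<bar> \<le> 2 * A \<and> squarefree (1 - a ^ n)}"
proof -
  define S where "S = {a::int. A \<le> real_of_int \<bar>a\<bar> \<and> real_of_int \<bar>a\<bar> \<le> 2 * A}"
  define G where "G = {a \<in> S. squarefree (1 - a ^ n)}"
  have "finite S" unfolding S_def by (rule finite_subset[OF _ finite_int_abs_le]) auto
  then have "finite G" by (simp add: G_def)
  have R: "R_count n A d = card {a \<in> S. 1 - a ^ n = d}" for d
    unfolding R_count_def S_def by (rule arg_cong[where f = card]) auto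
  have "{d. squarefree d \<and> R_count n A d \<noteq> 0} = (\<lambda>a. 1 - a ^ n) ` G"
    using \<open>finite S\<close> by (auto simp: R G_def card_eq_0_iff)
  moreover have "R_count n A d = card {a \<in> G. 1 - a ^ n = d}" if "d \<in> (\<lambda>a. 1 - a ^ n) ` G" for d
    using that unfolding R G_def by (auto intro: arg_cong[where f = card])
  ultimately have "(\<Sum>d \<in> {d. squarefree d \<and> R_count n A d \<noteq> 0}. R_count n A d)
      = (\<Sum>d \<in> (\<lambda>a. 1 - a ^ n) ` G. card {a \<in> G. 1 - a ^ n = d})"
    by simp
  also have "\<dots> = card G"
    using sum.image_gen[OF \<open>finite G\<close>, of "\<lambda>_. 1 :: nat" "\<lambda>a. 1 - a ^ n"] by simp
  finally show ?thesis by (simp add: G_def S_def)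
qed

lemma card_le_card_squarefree_values:
  fixes X :: "int set" and A :: real
  assumes "odd n" "0 \<le> A"
    and X: "\<And>x. x \<in> X \<Longrightarrow> A \<le> x \<and> x \<le> 2 * A \<and> (squarefree (1 - x ^ n) \<or> squarefree (1 + x ^ n))"
  shows "card X \<le> card {a::int. A \<le> real_of_int \<bar>a\<bar> \<and> real_of_int \<bar>a\<bar> \<le> 2 * A \<and> squarefree (1 - a ^ n)}"
proof -
  define g where "g x = (if squarefree (1 - x ^ n) then x else - x)" for x :: int
  have abs_g: "\<bar>g x\<bar> = x" if "x \<in> X" for x
    using X[OF that] \<open>0 \<le> A\<close> by (auto simp: g_def)
  show ?thesis
  proof (rule card_inj_on_le)
    show "inj_on g X" by (metis abs_g inj_onI)
    show "g ` X \<subseteq> {a. A \<le> real_of_int \<bar>a\<bar> \<and> real_of_int \<bar>a\<bar> \<le> 2 * A \<and> squarefree (1 - a ^ n)}"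
    proof (intro image_subsetI CollectI conjI)
      fix x assume "x \<in> X"
      then show "A \<le> real_of_int \<bar>g x\<bar>" "real_of_int \<bar>g x\<bar> \<le> 2 * A"
        using X abs_g by simp_all
      show "squarefree (1 - g x ^ n)"
        using X[OF \<open>x \<in> X\<close>] \<open>odd n\<close> by (auto simp: g_def)
    qed
    show "finite {a::int. A \<le> real_of_int \<bar>a\<bar> \<and> real_of_int \<bar>a\<bar> \<le> 2 * A \<and> squarefree (1 - a ^ n)}"
      by (rule finite_subset[OF _ finite_int_abs_le]) auto
  qed
qed

definition multipliers :: "int \<Rightarrow> real \<Rightarrow> int set" where
  "multipliers P A = {c. A \<le> real_of_int (P * c) \<and> real_of_int (P * c) \<le> 2 * A}"

definition exceptional :: "nat \<Rightarrow> int \<Rightarrow> real \<Rightarrow> int set" where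
  "exceptional n P A = {c \<in> multipliers P A. \<exists>p. prime p \<and> 8 * n < p \<and> real p \<le> A powr (3/5) \<and>
                                                  int p ^ 2 dvd (P * c) ^ (2 * n) - 1}"

lemma multipliers_eq_interval:
  assumes "P > 0"
  shows "multipliers P A = {\<lceil>A / P\<rceil>..\<lfloor>2 * A / P\<rfloor>}"
  using assms by (auto simp: multipliers_def ceiling_le_iff le_floor_iff field_simps)

lemma card_multipliers_diff_exceptional_ge:
  fixes n :: nat and A :: real and P :: int
  assumes "n > 0" and P: "P = fact (8 * n)" and "2 * P \<le> A"
    and growth: "1 + 2 * n * A powr (3/5) \<le> A / (4 * P)"
  shows "A / (2 * P) \<le> card (multipliers P A - exceptional n P A)"
proof -
  have "P > 0" unfolding P by simp
  then have "real_of_int P > 0" by simp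
  define L where "L = \<lceil>A / P\<rceil>"
  define U where "U = \<lfloor>2 * A / P\<rfloor>"
  have M: "multipliers P A = {L..U}" unfolding L_def U_def by (rule multipliers_eq_interval) fact
  have LU: "A / P \<le> L" "L \<le> A / P + 1" "2 * A / P - 1 \<le> U" "U \<le> 2 * A / P"
    unfolding L_def U_def by linarith+
  moreover have "2 \<le> A / P" using \<open>2 * P \<le> A\<close> \<open>real_of_int P > 0\<close> by (simp add: field_simps)
  ultimately have "L \<le> U" by linarith
  have "real (card (exceptional n P A)) \<le> 2 * n * (real_of_int (U - L) / (8 * n) + A powr (3/5))"
    unfolding exceptional_def M
  proof (rule card_exceptional_le)
    show "\<not> int p dvd P" if "prime p" "8 * n < p" for p
      using that unfolding P by (metis int_dvd_int_iff of_nat_fact prime_dvd_fact_iff not_le)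
  qed (use \<open>n > 0\<close> \<open>L \<le> U\<close> in auto)
  also have "\<dots> = real_of_int (U - L) / 4 + 2 * n * A powr (3/5)"
    using \<open>n > 0\<close> by (simp add: field_simps)
  also have "\<dots> \<le> A / (4 * P) + 2 * n * A powr (3/5)"
    using LU by (simp add: divide_right_mono)
  finally have "real (card (exceptional n P A)) \<le> A / (4 * P) + 2 * n * A powr (3/5)" .
  moreover have "exceptional n P A \<subseteq> multipliers P A" by (auto simp: exceptional_def)
  then have "card (multipliers P A - exceptional n P A) = card (multipliers P A) - card (exceptional n P A)"
      "card (exceptional n P A) \<le> card (multipliers P A)"
    unfolding M by (meson card_Diff_subset card_mono finite_atLeastAtMost_int finite_subset)+
  moreover have "A / P - 1 \<le> real (card (multipliers P A))" using LU \<open>L \<le> U\<close> by (simp add: M)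
  ultimately show ?thesis
    using growth by (simp add: of_nat_diff field_simps)
qed

lemma squarefree_at_unexceptional_multiplier:
  fixes n :: nat and A :: real and P c :: int
  assumes "n > 0" "P = fact (8 * n)" "0 \<le> A" and c: "c \<in> multipliers P A - exceptional n P A"
    and no_large: "\<And>m. int m ^ 2 dvd (P * c) ^ (2 * n) - 1 \<Longrightarrow>
                     real m < (real_of_int (P * c) / 2) powr (6/5)"
  shows "squarefree (1 - (P * c) ^ n) \<or> squarefree (1 + (P * c) ^ n)"
proof (rule squarefree_one_minus_or_one_plus_pow[where M = "8 * n" and Y = "A powr (3/5)"])
  fix m assume "int m ^ 2 dvd (P * c) ^ (2 * n) - 1"
  then have "real m < (real_of_int (P * c) / 2) powr (6/5)" by (rule no_large)
  also have "\<dots> \<le> A powr (6/5)"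
    using c \<open>0 \<le> A\<close> by (intro powr_mono2) (auto simp: multipliers_def)
  also have "\<dots> = (A powr (3/5)) ^ 2" by (simp add: power2_eq_square powr_add[symmetric])
  finally show "real m < (A powr (3/5)) ^ 2" .
qed (use assms in \<open>auto simp: exceptional_def\<close>)

lemma card_squarefree_values_ge:
  fixes n :: nat and A :: real and P :: int
  assumes "odd n" and P: "P = fact (8 * n)" and "2 * P \<le> A"
    and growth: "1 + 2 * n * A powr (3/5) \<le> A / (4 * P)"
    and "real_of_int X \<le> A"
    and no_large: "\<And>x m. X \<le> x \<Longrightarrow> int m ^ 2 dvd x ^ (2 * n) - 1 \<Longrightarrow>
                     real m < (real_of_int x / 2) powr (6/5)"
  shows "A / (2 * P) \<le> card {a::int. A \<le> real_of_int \<bar>a\<bar> \<and> real_of_int \<bar>a\<bar> \<le> 2 * A \<and> squarefree (1 - a ^ n)}"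
proof -
  have "n > 0" using \<open>odd n\<close> by (rule odd_pos)
  have "P > 0" unfolding P by simp
  then have "0 \<le> A" using \<open>2 * P \<le> A\<close> of_int_pos[of P, where 'a = real] by linarith
  have "card ((\<lambda>c. P * c) ` (multipliers P A - exceptional n P A))
      \<le> card {a::int. A \<le> real_of_int \<bar>a\<bar> \<and> real_of_int \<bar>a\<bar> \<le> 2 * A \<and> squarefree (1 - a ^ n)}"
  proof (rule card_le_card_squarefree_values[OF \<open>odd n\<close> \<open>0 \<le> A\<close>], clarify)
    fix c assume c: "c \<in> multipliers P A" "c \<notin> exceptional n P A"
    then have range: "A \<le> real_of_int (P * c)" "real_of_int (P * c) \<le> 2 * A"
      by (simp_all add: multipliers_def)
    then have lower: "X \<le> P * c" using \<open>real_of_int X \<le> A\<close> by linarith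
    have "squarefree (1 - (P * c) ^ n) \<or> squarefree (1 + (P * c) ^ n)"
      using c by (intro squarefree_at_unexceptional_multiplier[OF \<open>n > 0\<close> P \<open>0 \<le> A\<close>]
        no_large[OF lower]) simp_all
    with range show "A \<le> real_of_int (P * c) \<and> real_of_int (P * c) \<le> 2 * A \<and>
        (squarefree (1 - (P * c) ^ n) \<or> squarefree (1 + (P * c) ^ n))" by blast
  qed
  moreover have "card ((\<lambda>c. P * c) ` (multipliers P A - exceptional n P A))
      = card (multipliers P A - exceptional n P A)"
    using \<open>P > 0\<close> by (subst card_image) (auto simp: inj_on_def)
  moreover have "A / (2 * P) \<le> card (multipliers P A - exceptional n P A)"
    using \<open>n > 0\<close> P \<open>2 * P \<le> A\<close> growth by (rule card_multipliers_diff_exceptional_ge)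
  ultimately show ?thesis by (simp add: order_trans)
qed

lemma eventually_one_plus_powr_three_fifths_le:
  fixes k c :: real
  assumes "c > 0"
  shows "\<forall>\<^sub>F A in at_top. 1 + k * A powr (3/5) \<le> c * A"
proof -
  have "(\<lambda>A. 1 + k * A powr (3/5)) \<in> o(\<lambda>A. A)" by real_asymp
  then have "\<forall>\<^sub>F A in at_top. norm (1 + k * A powr (3/5)) \<le> c * norm A"
    using \<open>c > 0\<close> by (rule landau_o.smallD)
  then show ?thesis
    using eventually_ge_at_top[of "0::real"] by eventually_elim auto
qed

theorem lemma6:
  fixes n :: nat
  assumes abc: abc_conjecture
    and n_pos: "n > 0"
    and n_odd: "odd n"
  shows "\<exists>c::real. c > 0 \<and>
           (\<forall>\<^sub>F A in at_top.
              c * A \<le> real (\<Sum>d \<in> {d::int. squarefree d \<and> R_count n A d \<noteq> 0}. R_count n A d))"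
proof -
  define P :: int where "P = fact (8 * n)"
  have "P > 0" by (simp add: P_def)
  obtain X where no_large: "\<And>x m. X \<le> x \<Longrightarrow> int m ^ 2 dvd x ^ (2 * n) - 1 \<Longrightarrow>
      real m < (real_of_int x / 2) powr (6/5)"
    using abc_square_divisor_small[OF abc n_pos] by (auto simp: eventually_at_top_linorder)
  have "\<forall>\<^sub>F A in at_top. 1 + 2 * n * A powr (3/5) \<le> 1 / (4 * P) * A"
    using \<open>P > 0\<close> by (intro eventually_one_plus_powr_three_fifths_le) simp
  moreover have "\<forall>\<^sub>F A in at_top. real_of_int (max (2 * P) X) \<le> A" by (rule eventually_ge_at_top)
  ultimately have "\<forall>\<^sub>F A in at_top. 1 / (2 * P) * A \<le>
      real (\<Sum>d \<in> {d::int. squarefree d \<and> R_count n A d \<noteq> 0}. R_count n A d)"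
  proof eventually_elim
    case (elim A)
    then have "A / (2 * P) \<le> card {a::int. A \<le> real_of_int \<bar>a\<bar> \<and> real_of_int \<bar>a\<bar> \<le> 2 * A \<and>
                                            squarefree (1 - a ^ n)}"
      by (intro card_squarefree_values_ge[OF n_odd P_def _ _ _ no_large]) auto
    then show ?case unfolding sum_R_count_squarefree by simp
  qed
  then show ?thesis using \<open>P > 0\<close> by (intro exI[of _ "1 / (2 * P)"]) simp
qed

end
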